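(* Let $L$ be a finite lattice and $h:L\to\mathbb{R}$ be submodular, i.e. $h(x)+h(y)\ge h(x\uplus y)+h(x\cap y)$ for all $x,y\in L$. Suppose $h$ is increasing at $\cap$-irreducible elements, i.e. $h(a)\ge h(c)$ whenever $c$ is $\cap$-irreducible and $a\supseteq c$. Then $h$ is increasing: $a\supseteq c$ implies $h(a)\ge h(c)$ for all $a,c\in L$.
   Context: Lattices have order $\supseteq$, meet $\cap$, join $\uplus$. An element $c$ is $\cap$-irreducible if $c=x\cap y$ implies $c=x$ or $c=y$, and $c$ is not the top element. *)

theory Defs
  imports Complex_Main
begin

text \<open>The paper's order \<supseteq> is rendered as Isabelle's \<le> reversed: "a \<supseteq> c" is "c \<le> a";
  meet \<inter> is inf, join \<uplus> is sup, top is top.\<close>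

definition meet_irreducible :: "'a::bounded_lattice \<Rightarrow> bool" where
  "meet_irreducible c \<longleftrightarrow> c \<noteq> top \<and> (\<forall>x y. c = inf x y \<longrightarrow> c = x \<or> c = y)"

end

theory Submission
  imports Defs
begin

text \<open>Downward induction over the finite lattice. An element c that is neither top nor
  meet-irreducible is the meet of two strictly larger elements x and y, for which
  monotonicity is known. For a \<ge> c, put u = a \<sqinter> x. If u = c, submodularity on a, x
  together with h (a \<squnion> x) \<ge> h x gives h a \<ge> h c. Otherwise c < u \<le> a and u \<sqinter> y = c,
  so the same argument on u, y gives h u \<ge> h c, and h a \<ge> h u by induction.\<close>

lemma finite_order_downward_induct [case_names step]:
  fixes c :: "'a::{finite, order}"
  assumes step: "\<And>c. (\<And>z. c < z \<Longrightarrow> P z) \<Longrightarrow> P c"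
  shows "P c"
proof (induction c rule: measure_induct_rule[where f = "\<lambda>c. card {z. c < z}"])
  case (less c)
  show ?case
  proof (rule step)
    fix z assume "c < z"
    then have "{w. z < w} \<subset> {w. c < w}"
      by (auto intro: less_trans)
    then have "card {w. z < w} < card {w. c < w}"
      by (simp add: psubset_card_mono)
    then show "P z"
      using less by blast
  qed
qed

lemma not_meet_irreducible_obtain_above:
  fixes c :: "'a::bounded_lattice"
  assumes "\<not> meet_irreducible c" and "c \<noteq> top"
  obtains x y where "c = inf x y" and "c < x" and "c < y"
proof -
  from assms obtain x y where "c = inf x y" "c \<noteq> x" "c \<noteq> y"
    unfolding meet_irreducible_def by blast
  then show thesis
    using that by (simp add: less_le)
qed

lemma submodular_le_meet_side:
  fixes h :: "'a::lattice \<Rightarrow> real"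
  assumes submod: "\<And>x y. h x + h y \<ge> h (sup x y) + h (inf x y)"
    and "h y \<le> h (sup u y)"
  shows "h (inf u y) \<le> h u"
  using submod[of u y] assms(2) by linarith

lemma submodular_mono_at_meet:
  fixes h :: "'a::lattice \<Rightarrow> real"
  assumes submod: "\<And>x y. h x + h y \<ge> h (sup x y) + h (inf x y)"
    and c: "c = inf x y" "c < x" "c < y"
    and mono_above: "\<And>z b. c < z \<Longrightarrow> z \<le> b \<Longrightarrow> h z \<le> h b"
    and "c \<le> a"
  shows "h c \<le> h a"
proof (cases "inf a x = c")
  case True
  have "h x \<le> h (sup a x)"
    using mono_above[OF \<open>c < x\<close>] by simp
  then show ?thesis
    using submodular_le_meet_side[OF submod, of x a] True by (simp add: inf_commute sup_commute)
next
  case False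
  define u where "u = inf a x"
  have "c < u"
    using False \<open>c \<le> a\<close> c(1) by (simp add: u_def less_le le_infI2)
  have u_meet: "inf u y = c"
    using c(1) \<open>c \<le> a\<close> by (simp add: u_def inf.absorb_iff2 inf.assoc inf.left_commute)
  have "h y \<le> h (sup u y)"
    using mono_above[OF \<open>c < y\<close>] by simp
  then have "h c \<le> h u"
    using submodular_le_meet_side[OF submod] u_meet by metis
  also have "h u \<le> h a"
    using mono_above[OF \<open>c < u\<close>] by (simp add: u_def)
  finally show ?thesis .
qed

theorem lemma8:
  fixes h :: "'a::{finite, bounded_lattice} \<Rightarrow> real"
  assumes submod: "\<And>x y. h x + h y \<ge> h (sup x y) + h (inf x y)"
    and incr_irr: "\<And>a c. meet_irreducible c \<Longrightarrow> c \<le> a \<Longrightarrow> h a \<ge> h c"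
  shows "\<And>a c. c \<le> a \<Longrightarrow> h a \<ge> h c"
proof -
  fix a c :: 'a
  assume "c \<le> a"
  then show "h a \<ge> h c"
  proof (induction c arbitrary: a rule: finite_order_downward_induct)
    case (step c)
    consider "meet_irreducible c" | "c = top" | x y where "c = inf x y" "c < x" "c < y"
      using not_meet_irreducible_obtain_above by blast
    then show ?case
    proof cases
      case 1
      then show ?thesis using incr_irr step.prems by blast
    next
      case 2
      then have "a = c" using step.prems by (simp add: top_le)
      then show ?thesis by simp
    next
      case 3
      then show ?thesis
        using submodular_mono_at_meet[OF submod _ _ _ step.IH step.prems] by blast
    qed
  qed
qed

end
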